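(* Let $V$ be the set of integer points $(x,y,z)\in\mathbb{Z}^3$ such that none of $x\pm y,\ y\pm z,\ z\pm x$ is congruent to $0\pmod 4$, and let $G$ be the graph on $V$ with two vertices adjacent exactly when their Euclidean distance is $\sqrt2$. Define $h:V\to\mathbb{R}$ as follows. For $P=(x,y,z)\in V$ let $x'\ge y'\ge z'\ge 0$ be $|x|,|y|,|z|$ sorted in decreasing order, and put $h'(P)=x'+\tfrac{y'}{2}-\tfrac{s}{2}$ with $s=a(y' \bmod 4)\cdot b(x' \bmod 4)$, where $(a(0),\dots,a(3))=(0,1,0,-1)$ and $(b(0),\dots,b(3))=(1,0,-1,0)$. Then $h(P)=h'(P)+c(P)$, where ($\operatorname{sig}$ = sign function): $c(P)=0$ if $|x|\ge|y|\ge|z|$; $c(P)=-\operatorname{sig}(z)$ if $|x|\ge|z|\ge|y|$; $c(P)=-\operatorname{sig}(y)$ if $|y|\ge|x|\ge|z|$; $c(P)=0$ if $|y|\ge|z|\ge|x|$ and $yz\le0$; $c(P)=-2\operatorname{sig}(z)$ if $|y|\ge|z|\ge|x|$ and $yz\ge0$; $c(P)=-2\operatorname{sig}(z)$ if $|z|\ge|x|\ge|y|$; $c(P)=-\operatorname{sig}(z)$ if $|z|\ge|y|\ge|x|$ and $yz\le0$; $c(P)=-3\operatorname{sig}(y)$ if $|z|\ge|y|\ge|x|$ and $yz\ge0$. Let $T_3(P)=P+(2,2,2)$, $T_4(P)=P+(4,0,0)$, $T_6(P)=P+(4,4,0)$ with associated regions $Q_3=\{x+y\ge0,\ y+z\ge0,\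 z+x\ge0\}$, $Q_4=\{x\ge|y|,\ x\ge|z|\}$, $Q_6=\{y\ge|z|,\ x\ge y+|z|\}$, and let $\mathcal U=\{(x,y,z): x\ge y\ge z\ge0\}$. If $P\in V\cap\mathcal U$ and $h(P)\ge 15$, then there is $k\in\{3,4,6\}$ such that $P$, all neighbours of $P$ in $G$, and the images of $P$ and of all these neighbours under $T_k^{-1}$ all lie in $Q_k$.
   Context: $G$ is the sodalite network (edge-skeleton of the tiling of 3-space by truncated octahedra, scaled by 4); each vertex has four neighbours, whose coordinates differ from those of the vertex by $-1,0,+1$ in each component. For vertices the values $|x|,|y|,|z|$ are pairwise distinct, so exactly one case in the definition of $c(P)$ applies. *)

theory Defs
  imports Complex_Main
begin

type_synonym pt = "int \<times> int \<times> int"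

definition vtx :: "pt set" where
  "vtx = {(x,y,z). \<not> (4 dvd (x+y)) \<and> \<not> (4 dvd (x-y)) \<and> \<not> (4 dvd (y+z)) \<and> \<not> (4 dvd (y-z))
                  \<and> \<not> (4 dvd (z+x)) \<and> \<not> (4 dvd (z-x))}"

definition sqdist :: "pt \<Rightarrow> pt \<Rightarrow> int" where
  "sqdist P Q = (case P of (x,y,z) \<Rightarrow> case Q of (u,v,w) \<Rightarrow> (x-u)^2 + (y-v)^2 + (z-w)^2)"

definition adj :: "pt \<Rightarrow> pt \<Rightarrow> bool" where
  "adj P Q \<longleftrightarrow> P \<in> vtx \<and> Q \<in> vtx \<and> sqdist P Q = 2"

definition aa :: "int \<Rightarrow> int" where
  "aa r = (if r = 1 then 1 else if r = 3 then -1 else 0)"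

definition bb :: "int \<Rightarrow> int" where
  "bb r = (if r = 0 then 1 else if r = 2 then -1 else 0)"

definition s1 :: "pt \<Rightarrow> int" where
  "s1 P = (case P of (x,y,z) \<Rightarrow> max \<bar>x\<bar> (max \<bar>y\<bar> \<bar>z\<bar>))"
definition s3 :: "pt \<Rightarrow> int" where
  "s3 P = (case P of (x,y,z) \<Rightarrow> min \<bar>x\<bar> (min \<bar>y\<bar> \<bar>z\<bar>))"
definition s2 :: "pt \<Rightarrow> int" where
  "s2 P = (case P of (x,y,z) \<Rightarrow> \<bar>x\<bar> + \<bar>y\<bar> + \<bar>z\<bar> - s1 P - s3 P)"

definition h' :: "pt \<Rightarrow> real" where
  "h' P = real_of_int (s1 P) + real_of_int (s2 P) / 2
          - real_of_int (aa (s2 P mod 4) * bb (s1 P mod 4)) / 2"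

definition cc :: "pt \<Rightarrow> int" where
  "cc P = (case P of (x,y,z) \<Rightarrow>
     if \<bar>x\<bar> \<ge> \<bar>y\<bar> \<and> \<bar>y\<bar> \<ge> \<bar>z\<bar> then 0
     else if \<bar>x\<bar> \<ge> \<bar>z\<bar> \<and> \<bar>z\<bar> \<ge> \<bar>y\<bar> then - sgn z
     else if \<bar>y\<bar> \<ge> \<bar>x\<bar> \<and> \<bar>x\<bar> \<ge> \<bar>z\<bar> then - sgn y
     else if \<bar>y\<bar> \<ge> \<bar>z\<bar> \<and> \<bar>z\<bar> \<ge> \<bar>x\<bar> \<and> y*z \<le> 0 then 0
     else if \<bar>y\<bar> \<ge> \<bar>z\<bar> \<and> \<bar>z\<bar> \<ge> \<bar>x\<bar> \<and> y*z \<ge> 0 then - 2 * sgn z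
     else if \<bar>z\<bar> \<ge> \<bar>x\<bar> \<and> \<bar>x\<bar> \<ge> \<bar>y\<bar> then - 2 * sgn z
     else if \<bar>z\<bar> \<ge> \<bar>y\<bar> \<and> \<bar>y\<bar> \<ge> \<bar>x\<bar> \<and> y*z \<le> 0 then - sgn z
     else - 3 * sgn y)"

definition h :: "pt \<Rightarrow> real" where
  "h P = h' P + real_of_int (cc P)"

definition T3 :: "pt \<Rightarrow> pt" where "T3 = (\<lambda>(x,y,z). (x+2, y+2, z+2))"
definition T4 :: "pt \<Rightarrow> pt" where "T4 = (\<lambda>(x,y,z). (x+4, y, z))"
definition T6 :: "pt \<Rightarrow> pt" where "T6 = (\<lambda>(x,y,z). (x+4, y+4, z))"

definition T3inv :: "pt \<Rightarrow> pt" where "T3inv = (\<lambda>(x,y,z). (x-2, y-2, z-2))"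
definition T4inv :: "pt \<Rightarrow> pt" where "T4inv = (\<lambda>(x,y,z). (x-4, y, z))"
definition T6inv :: "pt \<Rightarrow> pt" where "T6inv = (\<lambda>(x,y,z). (x-4, y-4, z))"

definition Q3 :: "pt set" where "Q3 = {(x,y,z). x+y \<ge> 0 \<and> y+z \<ge> 0 \<and> z+x \<ge> 0}"
definition Q4 :: "pt set" where "Q4 = {(x,y,z). x \<ge> \<bar>y\<bar> \<and> x \<ge> \<bar>z\<bar>}"
definition Q6 :: "pt set" where "Q6 = {(x,y,z). y \<ge> \<bar>z\<bar> \<and> x \<ge> y + \<bar>z\<bar>}"

definition UU :: "pt set" where "UU = {(x,y,z). x \<ge> y \<and> y \<ge> z \<and> z \<ge> 0}"

definition Tinv :: "nat \<Rightarrow> pt \<Rightarrow> pt" where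
  "Tinv k = (if k = 3 then T3inv else if k = 4 then T4inv else T6inv)"
definition Qk :: "nat \<Rightarrow> pt set" where
  "Qk k = (if k = 3 then Q3 else if k = 4 then Q4 else Q6)"

lemma T_inverses: "T3inv \<circ> T3 = id" "T4inv \<circ> T4 = id" "T6inv \<circ> T6 = id"
  by (auto simp: T3inv_def T3_def T4inv_def T4_def T6inv_def T6_def)

end

theory Submission
  imports Defs
begin

text \<open>On \<open>UU\<close> the correction term vanishes and \<open>h P\<close> is at most \<open>x + (y + 1)/2\<close>, so \<open>h P \<ge> 15\<close>
  forces \<open>2x + y \<ge> 29\<close>. A neighbour differs from \<open>P\<close> by at most 1 in each coordinate, so it
  suffices that \<open>P\<close> lies deep enough inside \<open>Q\<^sub>k\<close>: either \<open>y + z \<ge> 6\<close> and \<open>Q\<^sub>3\<close> works, or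
  \<open>y, z \<le> 5\<close>, whence \<open>x \<ge> 12\<close> and \<open>Q\<^sub>4\<close> works.\<close>

lemma sqdist_le_2_imp_coord_dist:
  assumes "sqdist (x,y,z) (u,v,w) \<le> 2"
  shows "\<bar>u - x\<bar> \<le> 1" "\<bar>v - y\<bar> \<le> 1" "\<bar>w - z\<bar> \<le> 1"
proof -
  have abs_le_1: "\<bar>t\<bar> \<le> 1" if "t\<^sup>2 \<le> (2::int)" for t
  proof (rule ccontr)
    assume "\<not> \<bar>t\<bar> \<le> 1"
    then have "2 * 2 \<le> \<bar>t\<bar> * \<bar>t\<bar>" by (intro mult_mono) auto
    with that show False by (simp add: power2_eq_square)
  qed
  have sum: "(x-u)\<^sup>2 + (y-v)\<^sup>2 + (z-w)\<^sup>2 \<le> 2"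
    using assms by (simp add: sqdist_def)
  have "(x-u)\<^sup>2 \<le> 2" "(y-v)\<^sup>2 \<le> 2" "(z-w)\<^sup>2 \<le> 2"
    using sum zero_le_power2[of "x-u"] zero_le_power2[of "y-v"] zero_le_power2[of "z-w"]
    by linarith+
  then show "\<bar>u - x\<bar> \<le> 1" "\<bar>v - y\<bar> \<le> 1" "\<bar>w - z\<bar> \<le> 1"
    using abs_le_1 by (metis abs_minus_commute)+
qed

lemma h_UU_upper_bound:
  assumes "(x,y,z) \<in> UU"
  shows "2 * h (x,y,z) \<le> 2 * x + y + 1"
proof -
  have "x \<ge> y" "y \<ge> z" "z \<ge> 0" using assms by (auto simp: UU_def)
  then have "s1 (x,y,z) = x" "s2 (x,y,z) = y" "cc (x,y,z) = 0"
    by (auto simp: s1_def s2_def s3_def cc_def)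
  moreover have "aa r * bb t \<ge> -1" for r t by (auto simp: aa_def bb_def)
  then have "real_of_int (aa (y mod 4) * bb (x mod 4)) \<ge> -1"
    by (metis of_int_le_iff of_int_minus of_int_1)
  ultimately show ?thesis by (simp add: h_def h'_def)
qed

lemma ball_in_Q3:
  assumes "x + y \<ge> 6" "y + z \<ge> 6" "z + x \<ge> 6" "sqdist (x,y,z) N \<le> 2"
  shows "N \<in> Q3 \<and> T3inv N \<in> Q3"
proof -
  obtain u v w where N: "N = (u,v,w)" by (cases N) auto
  show ?thesis
    using assms sqdist_le_2_imp_coord_dist[of x y z u v w]
    by (auto simp: N Q3_def T3inv_def)
qed

lemma ball_in_Q4:
  assumes "x \<ge> \<bar>y\<bar> + 6" "x \<ge> \<bar>z\<bar> + 6" "sqdist (x,y,z) N \<le> 2"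
  shows "N \<in> Q4 \<and> T4inv N \<in> Q4"
proof -
  obtain u v w where N: "N = (u,v,w)" by (cases N) auto
  show ?thesis
    using assms sqdist_le_2_imp_coord_dist[of x y z u v w]
    by (auto simp: N Q4_def T4inv_def)
qed

lemma closed_neighbourhood_in_region:
  assumes "\<And>N. sqdist P N \<le> 2 \<Longrightarrow> N \<in> Qk k \<and> Tinv k N \<in> Qk k"
  shows "P \<in> Qk k \<and> Tinv k P \<in> Qk k \<and> (\<forall>N. adj P N \<longrightarrow> N \<in> Qk k \<and> Tinv k N \<in> Qk k)"
proof -
  have "sqdist P P \<le> 2" by (cases P) (simp add: sqdist_def)
  then show ?thesis using assms by (auto simp: adj_def)
qed

theorem lemma2:
  fixes P :: pt
  assumes "P \<in> vtx \<inter> UU" and "h P \<ge> 15"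
  shows "\<exists>k \<in> {3,4,6::nat}.
           P \<in> Qk k \<and> Tinv k P \<in> Qk k \<and>
           (\<forall>N. adj P N \<longrightarrow> N \<in> Qk k \<and> Tinv k N \<in> Qk k)"
proof -
  obtain x y z where P: "P = (x,y,z)" by (cases P) auto
  have U: "x \<ge> y" "y \<ge> z" "z \<ge> 0" using assms(1) by (auto simp: P UU_def)
  have "2 * x + y \<ge> 29"
    using h_UU_upper_bound[of x y z] assms by (simp add: P)
  show ?thesis
  proof (cases "y + z \<ge> 6")
    case True
    with U have "x + y \<ge> 6" "y + z \<ge> 6" "z + x \<ge> 6" by auto
    then have "P \<in> Qk 3 \<and> Tinv 3 P \<in> Qk 3 \<and> (\<forall>N. adj P N \<longrightarrow> N \<in> Qk 3 \<and> Tinv 3 N \<in> Qk 3)"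
      by (intro closed_neighbourhood_in_region) (simp add: P Qk_def Tinv_def ball_in_Q3)
    then show ?thesis by blast
  next
    case False
    with U \<open>2 * x + y \<ge> 29\<close> have "x \<ge> \<bar>y\<bar> + 6" "x \<ge> \<bar>z\<bar> + 6" by auto
    then have "P \<in> Qk 4 \<and> Tinv 4 P \<in> Qk 4 \<and> (\<forall>N. adj P N \<longrightarrow> N \<in> Qk 4 \<and> Tinv 4 N \<in> Qk 4)"
      by (intro closed_neighbourhood_in_region) (simp add: P Qk_def Tinv_def ball_in_Q4)
    then show ?thesis by blast
  qed
qed

end
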